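(* Let $a,b>0$. As $q\to1-0$, $$\log\big\{(q^a:q^{a+b})_\infty\,(q^b:q^{a+b})_\infty\big\}=\frac{\pi^2}{3(a+b)\log q}+\log\Big\{2\sin\Big(\frac{a}{a+b}\pi\Big)\Big\}+O(\log q).$$
   Context: For $0<q<1$ and $c,d>0$, $(q^c:q^d)_\infty=\prod_{r=0}^{\infty}(1-q^{c+dr})$. *)

theory Defs
  imports "HOL-Analysis.Analysis" "HOL-Library.Landau_Symbols"
begin

text \<open>The infinite product (q^c : q^d)_inf = prod_{r>=0} (1 - q^(c+d r)), for 0<q<1, c,d>0.\<close>
definition qpoch :: "real \<Rightarrow> real \<Rightarrow> real \<Rightarrow> real" where
  "qpoch q c d = (\<Prod>r. 1 - q powr (c + d * real r))"

end

theory Submission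
  imports Defs "HOL-Real_Asymp.Real_Asymp"
begin

text \<open>
  Put h = -(a + b) ln q, x = a / (a + b) and L(c) = \<Sum>r. ln (1 - e^(-h (r + c))), so that the
  logarithm of the product is L(x) + L(1 - x). Write ln (1 - e^(-u)) = ln u + k(u), where
  k'' = O((1 + u)^(-2)). Along r the second differences of k sum to O(h), while those of ln u sum,
  by the product formula for the sine, to ln sin (pi x); thus L(x) + L(1 - x) = 2 L(1/2) + ln sin (pi x) + O(h).
  For x = 1/4 the left-hand side is L(1/2) at step h/2, so U(h) = L(1/2) + pi^2/(6h) - (ln 2)/2
  satisfies U(h/2) = 2 U(h) + O(h). As h U(h) \<rightarrow> 0 (Tannery's theorem on the Lambert series of L(1/2)),
  iterating the doubling relation gives U(h) = O(h).
\<close>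

lemma two_mul_le_exp_minus_exp:
  fixes v :: real
  assumes "0 \<le> v"
  shows "2 * v \<le> exp v - exp (-v)"
  using real_le_x_sinh[OF assms] by (simp add: exp_minus)

lemma exp_minus_exp_le:
  fixes v :: real
  assumes "0 \<le> v" "v \<le> 1"
  shows "exp v - exp (-v) \<le> 2 * v + v ^ 3"
proof -
  obtain t where t: "\<bar>t\<bar> \<le> \<bar>v\<bar>" "exp v = (\<Sum>m<3. v ^ m / fact m) + exp t / fact 3 * v ^ 3"
    using Maclaurin_exp_le[of v 3] by blast
  obtain s where s: "\<bar>s\<bar> \<le> \<bar>-v\<bar>" "exp (-v) = (\<Sum>m<3. (-v) ^ m / fact m) + exp s / fact 3 * (-v) ^ 3"
    using Maclaurin_exp_le[of "-v" 3] by blast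
  have v3: "0 \<le> v ^ 3" using assms by simp
  have "exp t \<le> 3" "exp s \<le> 3"
    using t(1) s(1) assms exp_le exp_le_cancel_iff[of t 1] exp_le_cancel_iff[of s 1] by linarith+
  then have "exp t / 6 * v ^ 3 \<le> v ^ 3 / 2" "exp s / 6 * v ^ 3 \<le> v ^ 3 / 2"
    using mult_right_mono[OF _ v3, of "exp t / 6" "1/2"] mult_right_mono[OF _ v3, of "exp s / 6" "1/2"]
    by simp_all
  moreover have "exp v = 1 + v + v\<^sup>2 / 2 + exp t / 6 * v ^ 3"
    using t(2) by (simp add: numeral_3_eq_3 power2_eq_square)
  moreover have "exp (-v) = 1 - v + v\<^sup>2 / 2 - exp s / 6 * v ^ 3"
    using s(2) by (simp add: numeral_3_eq_3 power2_eq_square)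
  moreover have "0 \<le> exp s / 6 * v ^ 3" using v3 by simp
  ultimately show ?thesis by linarith
qed

lemma one_minus_exp_neg_eq:
  fixes u :: real
  shows "1 - exp (-u) = exp (-(u/2)) * (exp (u/2) - exp (-(u/2)))"
  by (simp add: algebra_simps flip: exp_add)

lemma second_difference_bound:
  fixes f f' f'' :: "real \<Rightarrow> real"
  assumes f': "\<And>z. \<bar>z - p\<bar> \<le> \<bar>d\<bar> \<Longrightarrow> (f has_real_derivative f' z) (at z)"
    and f'': "\<And>z. \<bar>z - p\<bar> \<le> \<bar>d\<bar> \<Longrightarrow> (f' has_real_derivative f'' z) (at z)"
    and B: "\<And>z. \<bar>z - p\<bar> \<le> \<bar>d\<bar> \<Longrightarrow> \<bar>f'' z\<bar> \<le> B"
  shows "\<bar>f (p + d) + f (p - d) - 2 * f p\<bar> \<le> 2 * d\<^sup>2 * B"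
proof -
  define e where "e = \<bar>d\<bar>"
  have sym: "f (p + d) + f (p - d) = f (p + e) + f (p - e)"
    by (cases "0 \<le> d") (auto simp: e_def)
  show ?thesis
  proof (cases "e = 0")
    case True
    then show ?thesis using B[of p] by (simp add: e_def)
  next
    case False
    then have e: "0 < e" by (simp add: e_def)
    obtain z1 where z1: "p < z1" "z1 < p + e" "f (p + e) - f p = e * f' z1"
      using MVT2[of p "p + e" f f'] e f' by (auto simp: e_def)
    obtain z2 where z2: "p - e < z2" "z2 < p" "f p - f (p - e) = e * f' z2"
      using MVT2[of "p - e" p f f'] e f' by (auto simp: e_def)
    obtain z3 where z3: "z2 < z3" "z3 < z1" "f' z1 - f' z2 = (z1 - z2) * f'' z3"
      using MVT2[of z2 z1 f' f''] z1 z2 f'' by (auto simp: e_def)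
    have "f (p + e) + f (p - e) - 2 * f p = e * (f' z1 - f' z2)"
      using z1(3) z2(3) by (simp add: algebra_simps)
    also have "\<dots> = e * (z1 - z2) * f'' z3"
      using z3(3) by simp
    finally have "f (p + e) + f (p - e) - 2 * f p = e * (z1 - z2) * f'' z3" .
    moreover have "\<bar>f'' z3\<bar> \<le> B" using B z1 z2 z3 by (simp add: e_def)
    moreover have "0 \<le> z1 - z2" "z1 - z2 \<le> 2 * e" using z1 z2 z3 by linarith+
    ultimately have "\<bar>f (p + e) + f (p - e) - 2 * f p\<bar> \<le> e * (2 * e) * B"
      using e by (simp add: abs_mult mult_mono mult_left_mono)
    moreover have "e * (2 * e) = 2 * d\<^sup>2"
      by (simp add: e_def power2_eq_square)
    ultimately show ?thesis using sym by metis
  qed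
qed

lemma sums_swap_nonneg:
  fixes f :: "nat \<Rightarrow> nat \<Rightarrow> real"
  assumes nonneg: "\<And>m r. 0 \<le> f m r"
    and rows: "\<And>m. (\<lambda>r. f m r) sums g m"
    and g: "summable g"
  shows "(\<lambda>r. \<Sum>m. f m r) sums (\<Sum>m. g m)"
proof -
  have partial_le: "(\<Sum>r<R. f m r) \<le> g m" for m R
    using sum_le_suminf[OF sums_summable[OF rows[of m]], of "{..<R}"] nonneg sums_unique[OF rows[of m]]
    by simp
  have "f m r \<le> g m" for m r
    using member_le_sum[of r "{..<Suc r}" "f m"] nonneg partial_le[of m "Suc r"] by simp
  then have "summable (\<lambda>m. f m r)" for r
    by (intro summable_comparison_test'[OF g, of 0]) (simp add: nonneg)
  then have swap: "(\<Sum>r<R. \<Sum>m. f m r) = (\<Sum>m. \<Sum>r<R. f m r)" for R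
    by (intro suminf_sum[symmetric])
  have "\<forall>\<^sub>F (m, R) in sequentially \<times>\<^sub>F sequentially. norm (\<Sum>r<R. f m r) \<le> g m"
    using partial_le nonneg by (intro always_eventually) (auto simp: sum_nonneg)
  then have "(\<lambda>R. \<Sum>m. \<Sum>r<R. f m r) \<longlonglongrightarrow> (\<Sum>m. g m)"
    using tannerys_theorem[OF rows[unfolded sums_def] _ g] by simp
  then show ?thesis unfolding sums_def swap .
qed

lemma doubling_iterate:
  fixes f :: "real \<Rightarrow> real"
  assumes step: "\<And>h. 0 < h \<Longrightarrow> \<bar>f (h/2) - 2 * f h\<bar> \<le> C * h"
  shows "0 < h \<Longrightarrow> \<bar>f h - f (h / 2^n) / 2^n\<bar> \<le> 2 * C * h / 3 * (1 - 1 / 4^n)"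
proof (induction n arbitrary: h)
  case (Suc n)
  have "\<bar>f h - f (h / 2^Suc n) / 2^Suc n\<bar>
      = \<bar>- (f (h/2) - 2 * f h) / 2 + (f (h/2) - f (h/2 / 2^n) / 2^n) / 2\<bar>"
    by (simp add: field_simps)
  also have "\<dots> \<le> \<bar>f (h/2) - 2 * f h\<bar> / 2 + \<bar>f (h/2) - f (h/2 / 2^n) / 2^n\<bar> / 2"
    by (rule order_trans[OF abs_triangle_ineq]) simp
  also have "\<dots> \<le> C * h / 2 + 2 * C * (h/2) / 3 * (1 - 1 / 4^n) / 2"
    using step[OF Suc.prems] Suc.IH[of "h/2"] Suc.prems by (intro add_mono divide_right_mono) auto
  also have "\<dots> = 2 * C * h / 3 * (1 - 1 / 4^Suc n)" by (simp add: field_simps)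
  finally show ?case .
qed simp

lemma abs_le_of_doubling:
  fixes f :: "real \<Rightarrow> real"
  assumes step: "\<And>h. 0 < h \<Longrightarrow> \<bar>f (h/2) - 2 * f h\<bar> \<le> C * h"
    and lim: "((\<lambda>h. h * f h) \<longlongrightarrow> 0) (at_right 0)"
    and h: "0 < h"
  shows "\<bar>f h\<bar> \<le> 2 * C * h / 3"
proof -
  have "0 \<le> C * h" using step[OF h] abs_ge_zero order_trans by blast
  then have "0 \<le> C" using h by (simp add: zero_le_mult_iff)
  have "(\<lambda>n. h / 2^n) \<longlonglongrightarrow> 0" by (intro LIMSEQ_divide_realpow_zero) simp
  then have "filterlim (\<lambda>n. h / 2^n) (at_right 0) sequentially"
    using h by (simp add: filterlim_at)
  from filterlim_compose[OF lim this]
  have "(\<lambda>n. h / 2^n * f (h / 2^n) / h) \<longlonglongrightarrow> 0 / h" using h by (intro tendsto_divide) auto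
  then have "(\<lambda>n. f (h / 2^n) / 2^n) \<longlonglongrightarrow> 0" using h by simp
  then have "(\<lambda>n. \<bar>f h - f (h / 2^n) / 2^n\<bar>) \<longlonglongrightarrow> \<bar>f h - 0\<bar>" by (intro tendsto_intros)
  moreover have "2 * C * h / 3 * (1 - 1 / 4^n) \<le> 2 * C * h / 3" for n :: nat
    using \<open>0 \<le> C\<close> h by (intro mult_left_le) auto
  then have "\<bar>f h - f (h / 2^n) / 2^n\<bar> \<le> 2 * C * h / 3" for n :: nat
    using doubling_iterate[OF step h, of n] by (meson order_trans)
  ultimately show ?thesis by (intro LIMSEQ_le_const2) auto
qed

subsection \<open>The sine product\<close>

lemma prod_shift_pair_eq:
  fixes x :: real
  shows "(\<Prod>r<Suc n. (real r + x) * (real r + (1 - x)))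
    = x * (real n + 1 - x) * (fact n)\<^sup>2 * (\<Prod>k=1..n. 1 - x\<^sup>2 / (real k)\<^sup>2)"
proof (induction n)
  case (Suc n)
  define P where "P = (\<Prod>k=1..n. 1 - x\<^sup>2 / (real k)\<^sup>2)"
  have "real n + 1 \<noteq> 0" by linarith
  then have "(real n + 1)\<^sup>2 * (1 - x\<^sup>2 / (real n + 1)\<^sup>2) = (real n + 1)\<^sup>2 - x\<^sup>2"
    by (simp add: right_diff_distrib)
  also have "\<dots> = (real n + 1 - x) * (real n + 1 + x)"
    by (simp add: power2_eq_square algebra_simps)
  finally have sq: "(real n + 1)\<^sup>2 * (1 - x\<^sup>2 / (real n + 1)\<^sup>2) = (real n + 1 - x) * (real n + 1 + x)" .
  have "(\<Prod>r<Suc (Suc n). (real r + x) * (real r + (1 - x)))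
      = x * (real n + 1 - x) * (fact n)\<^sup>2 * P * ((real n + 1 + x) * (real n + 1 + (1 - x)))"
    using Suc.IH by (simp add: P_def add_ac)
  also have "\<dots> = x * (real n + 2 - x) * ((real n + 1) * fact n)\<^sup>2 * (P * (1 - x\<^sup>2 / (real n + 1)\<^sup>2))"
    using sq by (simp add: power_mult_distrib)
  also have "\<dots> = x * (real (Suc n) + 1 - x) * (fact (Suc n))\<^sup>2 * (\<Prod>k=1..Suc n. 1 - x\<^sup>2 / (real k)\<^sup>2)"
    by (simp add: P_def prod.cl_ivl_Suc add_ac)
  finally show ?case .
qed simp

lemma prod_shift_pair_tendsto_sin:
  fixes x :: real
  assumes x: "0 < x" "x < 1"
  shows "(\<lambda>n. \<Prod>r<Suc n. (real r + x) * (real r + (1 - x)) / (real r + 1/2)\<^sup>2) \<longlonglongrightarrow> sin (pi * x)"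
proof -
  define P where "P y n = (\<Prod>k=1..n. 1 - y\<^sup>2 / (real k)\<^sup>2)" for y :: real and n
  have cancel: "a * c * F * p / (b * d * F * q) = a / b * (c / d) * (p / q)"
    if "F \<noteq> 0" for a b c d F p q :: real
    using that by simp
  have "(\<Prod>r<Suc n. (real r + x) * (real r + (1 - x)) / (real r + 1/2)\<^sup>2)
      = (\<Prod>r<Suc n. (real r + x) * (real r + (1 - x))) / (\<Prod>r<Suc n. (real r + 1/2) * (real r + (1 - 1/2)))"
    for n by (simp add: prod_dividef power2_eq_square)
  also have "\<dots> n = x / (1/2) * ((real n + 1 - x) / (real n + 1 - 1/2)) * (P x n / P (1/2) n)" for n
    unfolding prod_shift_pair_eq P_def[symmetric] by (rule cancel) simp
  finally have eq: "(\<Prod>r<Suc n. (real r + x) * (real r + (1 - x)) / (real r + 1/2)\<^sup>2)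
      = x / (1/2) * ((real n + 1 - x) / (real n + 1 - 1/2)) * (P x n / P (1/2) n)" for n .
  have "(\<lambda>n. P x n) \<longlonglongrightarrow> sin (pi * x) / (pi * x)"
    unfolding P_def using sin_product_formula_real' x by simp
  moreover have "(\<lambda>n. P (1/2) n) \<longlonglongrightarrow> 2 / pi"
    unfolding P_def using sin_product_formula_real'[of "1/2"] by simp
  moreover have "(\<lambda>n. (real n + 1 - x) / (real n + 1 - 1/2)) \<longlonglongrightarrow> 1"
    by real_asymp
  ultimately have "(\<lambda>n. x / (1/2) * ((real n + 1 - x) / (real n + 1 - 1/2)) * (P x n / P (1/2) n))
      \<longlonglongrightarrow> x / (1/2) * 1 * ((sin (pi * x) / (pi * x)) / (2 / pi))"
    by (intro tendsto_intros) auto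
  also have "x / (1/2) * 1 * ((sin (pi * x) / (pi * x)) / (2 / pi)) = sin (pi * x)"
    using x by (simp add: field_simps)
  finally show ?thesis unfolding eq .
qed

lemma ln_sin_pi_sums:
  fixes x :: real
  assumes x: "0 < x" "x < 1"
  shows "(\<lambda>r. ln ((real r + x) * (real r + (1 - x)) / (real r + 1/2)\<^sup>2)) sums ln (sin (pi * x))"
proof -
  have "0 < sin (pi * x)" using x by (intro sin_gt_zero) auto
  then have lim: "(\<lambda>n. ln (\<Prod>r<Suc n. (real r + x) * (real r + (1 - x)) / (real r + 1/2)\<^sup>2))
      \<longlonglongrightarrow> ln (sin (pi * x))"
    by (intro tendsto_ln[OF prod_shift_pair_tendsto_sin[OF x]]) simp
  have eq: "(\<Sum>r<n. ln ((real r + x) * (real r + (1 - x)) / (real r + 1/2)\<^sup>2))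
      = ln (\<Prod>r<n. (real r + x) * (real r + (1 - x)) / (real r + 1/2)\<^sup>2)" for n
    using x by (intro ln_prod[symmetric]) auto
  show ?thesis
    unfolding sums_def eq by (rule LIMSEQ_imp_Suc[OF lim])
qed

subsection \<open>Lambert series\<close>

definition log1mexp :: "real \<Rightarrow> real" where
  "log1mexp u = ln (1 - exp (-u))"

text \<open>\<^term>\<open>log_qpoch c h\<close> is ln (e^(-hc) : e^(-h))_inf, see \<open>qpoch_eq_exp_log_qpoch\<close>.\<close>

definition log_qpoch :: "real \<Rightarrow> real \<Rightarrow> real" where
  "log_qpoch c h = (\<Sum>r. log1mexp (h * (real r + c)))"

lemma log1mexp_sums:
  fixes u :: real
  assumes "0 < u"
  shows "(\<lambda>m. - (exp (-u) ^ m / real m)) sums log1mexp u"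
proof -
  have "\<bar>- exp (-u)\<bar> < 1" using assms by simp
  from ln_series'[OF this] show ?thesis by (simp add: log1mexp_def)
qed

lemma summable_lambert_coeffs:
  fixes h c :: real
  assumes h: "0 < h" and c: "0 < c"
  shows "summable (\<lambda>m. exp (- (h * c * real m)) / (real m * (1 - exp (- (h * real m)))))"
proof (rule summable_comparison_test')
  show "summable (\<lambda>m. exp (- (h * c)) ^ m / (1 - exp (- h)))"
    using h c by (intro summable_divide summable_geometric) simp
  fix m :: nat
  assume m: "1 \<le> m"
  have "exp (- (h * real m)) \<le> exp (- h)" using m h by (simp add: mult_le_cancel_left1)
  then have "1 - exp (- h) \<le> 1 * (1 - exp (- (h * real m)))" by simp
  also have "\<dots> \<le> real m * (1 - exp (- (h * real m)))"
    using m h by (intro mult_right_mono) auto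
  finally have "1 - exp (- h) \<le> real m * (1 - exp (- (h * real m)))" .
  moreover have "0 < 1 - exp (- h)" using h by simp
  ultimately have "exp (- (h * c * real m)) / (real m * (1 - exp (- (h * real m))))
      \<le> exp (- (h * c * real m)) / (1 - exp (- h))"
    using m h by (intro divide_left_mono mult_pos_pos) auto
  moreover have "exp (- (h * c * real m)) = exp (- (h * c)) ^ m"
    by (simp flip: exp_of_nat_mult add: algebra_simps)
  moreover have "0 \<le> exp (- (h * c * real m)) / (real m * (1 - exp (- (h * real m))))"
    using h by (simp add: divide_nonneg_nonneg)
  ultimately show "norm (exp (- (h * c * real m)) / (real m * (1 - exp (- (h * real m)))))
      \<le> exp (- (h * c)) ^ m / (1 - exp (- h))"
    by (metis abs_of_nonneg real_norm_def)
qed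

lemma log1mexp_shift_sums_lambert:
  fixes h c :: real
  assumes h: "0 < h" and c: "0 < c"
  shows "(\<lambda>r. log1mexp (h * (real r + c)))
    sums - (\<Sum>m. exp (- (h * c * real m)) / (real m * (1 - exp (- (h * real m)))))"
proof -
  define g where "g m = exp (- (h * c * real m)) / (real m * (1 - exp (- (h * real m))))" for m :: nat
  have row: "(\<lambda>r. exp (- (h * (real r + c))) ^ m / real m) sums g m" for m
  proof (cases "m = 0")
    case False
    have "exp (- (h * (real r + c))) ^ m = exp (- (h * c * real m)) * exp (- (h * real m)) ^ r" for r
      by (simp flip: exp_of_nat_mult exp_add add: algebra_simps)
    moreover have "exp (- (h * real m)) < 1" using False h by simp
    then have "(\<lambda>r. exp (- (h * c * real m)) / real m * exp (- (h * real m)) ^ r)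
        sums (exp (- (h * c * real m)) / real m * (1 / (1 - exp (- (h * real m)))))"
      by (intro sums_mult geometric_sums) simp
    ultimately show ?thesis by (simp add: g_def field_simps)
  qed (simp add: g_def)
  have "(\<lambda>r. \<Sum>m. exp (- (h * (real r + c))) ^ m / real m) sums (\<Sum>m. g m)"
    using summable_lambert_coeffs[OF h c] unfolding g_def[symmetric]
    by (intro sums_swap_nonneg[OF _ row]) simp_all
  moreover have "(\<Sum>m. exp (- (h * (real r + c))) ^ m / real m) = - log1mexp (h * (real r + c))" for r
    using sums_minus[OF log1mexp_sums[of "h * (real r + c)"]] h c by (simp add: sums_iff)
  ultimately show ?thesis unfolding g_def using sums_minus by fastforce
qed

lemma log_qpoch_sums:
  fixes h c :: real
  assumes "0 < h" "0 < c"
  shows "(\<lambda>r. log1mexp (h * (real r + c))) sums log_qpoch c h"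
  unfolding log_qpoch_def using sums_summable[OF log1mexp_shift_sums_lambert[OF assms]]
  by (rule summable_sums)

lemma log_qpoch_lambert:
  fixes h c :: real
  assumes "0 < h" "0 < c"
  shows "log_qpoch c h = - (\<Sum>m. exp (- (h * c * real m)) / (real m * (1 - exp (- (h * real m)))))"
  using log_qpoch_sums[OF assms] log1mexp_shift_sums_lambert[OF assms] by (rule sums_unique2)

subsection \<open>Second differences\<close>

text \<open>Removing the logarithmic singularity at 0 leaves a function with second derivative O((1 + u)^(-2)).\<close>

definition log1mexp_reg :: "real \<Rightarrow> real" where
  "log1mexp_reg u = log1mexp u - ln u"

lemma log1mexp_reg_bounds:
  fixes u :: real
  assumes u: "0 < u"
  shows "- u / 2 \<le> log1mexp_reg u" "log1mexp_reg u \<le> 0"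
proof -
  have pos: "0 < 1 - exp (-u)" using u by simp
  have reg: "log1mexp_reg u = ln ((1 - exp (-u)) / u)"
    unfolding log1mexp_reg_def log1mexp_def using pos u by (simp add: ln_div)
  have "1 - u \<le> exp (-u)" using exp_ge_add_one_self[of "-u"] by simp
  then have "(1 - exp (-u)) / u \<le> 1" using u by (simp add: divide_le_eq)
  then show "log1mexp_reg u \<le> 0" unfolding reg using pos u by simp
  have "exp (-(u/2)) * u \<le> 1 - exp (-u)"
    unfolding one_minus_exp_neg_eq using two_mul_le_exp_minus_exp[of "u/2"] u
    by (simp add: mult_left_mono)
  then have "exp (-(u/2)) \<le> (1 - exp (-u)) / u" using u by (simp add: le_divide_eq)
  then have "ln (exp (-(u/2))) \<le> ln ((1 - exp (-u)) / u)" using pos u by (subst ln_le_cancel_iff) auto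
  then show "- u / 2 \<le> log1mexp_reg u" unfolding reg by simp
qed

lemma log1mexp_reg_has_derivative:
  fixes u :: real
  assumes u: "0 < u"
  shows "(log1mexp_reg has_real_derivative 1 / (exp u - 1) - 1 / u) (at u)"
proof -
  have "exp (-u) < 1" "1 < exp u" using u by simp_all
  then have "((\<lambda>u. ln (1 - exp (-u)) - ln u) has_real_derivative 1 / (exp u - 1) - 1 / u) (at u)"
    using u by (auto intro!: derivative_eq_intros simp: exp_minus field_simps)
  then show ?thesis unfolding log1mexp_reg_def[abs_def] log1mexp_def .
qed

lemma log1mexp_reg_deriv_has_derivative:
  fixes u :: real
  assumes u: "0 < u"
  shows "((\<lambda>u. 1 / (exp u - 1) - 1 / u) has_real_derivative 1 / u\<^sup>2 - exp u / (exp u - 1)\<^sup>2) (at u)"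
proof -
  have "exp u - 1 \<noteq> 0" using u by simp
  then show ?thesis
    using u by (auto intro!: derivative_eq_intros simp: field_simps power2_eq_square)
qed

lemma log1mexp_reg_second_deriv_bounds:
  fixes u :: real
  assumes u: "0 < u"
  shows "0 \<le> 1 / u\<^sup>2 - exp u / (exp u - 1)\<^sup>2" "1 / u\<^sup>2 - exp u / (exp u - 1)\<^sup>2 \<le> 4 / (1 + u)\<^sup>2"
proof -
  define w where "w = exp (u/2) - exp (-(u/2))"
  have uw: "u \<le> w" using two_mul_le_exp_minus_exp[of "u/2"] u by (simp add: w_def)
  have "exp u - 1 = exp (u/2) * w" by (simp add: w_def algebra_simps flip: exp_add)
  then have "exp u / (exp u - 1)\<^sup>2 = exp u / ((exp (u/2))\<^sup>2 * w\<^sup>2)" by (simp add: power_mult_distrib)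
  also have "(exp (u/2))\<^sup>2 = exp u" by (simp flip: exp_of_nat_mult)
  finally have diff: "1 / u\<^sup>2 - exp u / (exp u - 1)\<^sup>2 = 1 / u\<^sup>2 - 1 / w\<^sup>2" using u uw by simp
  have "u\<^sup>2 \<le> w\<^sup>2" using uw u by (simp add: power_mono)
  then have "1 / w\<^sup>2 \<le> 1 / u\<^sup>2" using u by (simp add: frac_le)
  then show "0 \<le> 1 / u\<^sup>2 - exp u / (exp u - 1)\<^sup>2" unfolding diff by simp
  have "1 / u\<^sup>2 - 1 / w\<^sup>2 \<le> 4 / (1 + u)\<^sup>2"
  proof (cases "u \<le> 1")
    case False
    then have "(1 + u)\<^sup>2 \<le> (2 * u)\<^sup>2" by (intro power_mono) auto
    then have "1 / u\<^sup>2 \<le> 4 / (1 + u)\<^sup>2" using u by (simp add: field_simps)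
    moreover have "0 \<le> 1 / w\<^sup>2" by simp
    ultimately show ?thesis by linarith
  next
    case True
    have "w \<le> u + u ^ 3 / 8"
      using exp_minus_exp_le[of "u/2"] u True by (simp add: w_def power_divide)
    then have "w\<^sup>2 - u\<^sup>2 \<le> (u + u ^ 3 / 8)\<^sup>2 - u\<^sup>2"
      using u uw by (simp add: power_mono)
    also have "\<dots> = u ^ 4 * (1/4 + u\<^sup>2 / 64)" by (simp add: algebra_simps power2_eq_square power4_eq_xxxx power3_eq_cube)
    also have "\<dots> \<le> u ^ 4 * 1" using power_le_one[of u 2] True u by (intro mult_left_mono) auto
    also have "\<dots> \<le> u\<^sup>2 * w\<^sup>2" using \<open>u\<^sup>2 \<le> w\<^sup>2\<close> u by (simp add: power4_eq_xxxx power2_eq_square mult_left_mono)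
    finally have "1 / u\<^sup>2 - 1 / w\<^sup>2 \<le> 1" using u uw by (simp add: field_simps)
    also have "1 \<le> 4 / (1 + u)\<^sup>2"
      using True u power_mono[of "1 + u" 2 2] by (simp add: field_simps)
    finally show ?thesis .
  qed
  then show "1 / u\<^sup>2 - exp u / (exp u - 1)\<^sup>2 \<le> 4 / (1 + u)\<^sup>2" unfolding diff .
qed

lemma log1mexp_reg_second_difference:
  fixes p d :: real
  assumes pd: "0 < p - \<bar>d\<bar>"
  shows "\<bar>log1mexp_reg (p + d) + log1mexp_reg (p - d) - 2 * log1mexp_reg p\<bar>
    \<le> 2 * d\<^sup>2 * (4 / (1 + (p - \<bar>d\<bar>))\<^sup>2)"
proof (rule second_difference_bound)
  fix z
  assume "\<bar>z - p\<bar> \<le> \<bar>d\<bar>"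
  then have z: "p - \<bar>d\<bar> \<le> z" by linarith
  then have "0 < z" using pd by linarith
  then show "(log1mexp_reg has_real_derivative 1 / (exp z - 1) - 1 / z) (at z)"
    and "((\<lambda>u. 1 / (exp u - 1) - 1 / u) has_real_derivative 1 / z\<^sup>2 - exp z / (exp z - 1)\<^sup>2) (at z)"
    by (rule log1mexp_reg_has_derivative log1mexp_reg_deriv_has_derivative)+
  have "1 / z\<^sup>2 - exp z / (exp z - 1)\<^sup>2 \<le> 4 / (1 + z)\<^sup>2"
    using log1mexp_reg_second_deriv_bounds(2) \<open>0 < z\<close> .
  also have "\<dots> \<le> 4 / (1 + (p - \<bar>d\<bar>))\<^sup>2"
    using z pd by (intro divide_left_mono power_mono mult_pos_pos) auto
  finally show "\<bar>1 / z\<^sup>2 - exp z / (exp z - 1)\<^sup>2\<bar> \<le> 4 / (1 + (p - \<bar>d\<bar>))\<^sup>2"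
    using log1mexp_reg_second_deriv_bounds(1)[OF \<open>0 < z\<close>] by simp
qed

definition log1mexp_defect :: "real \<Rightarrow> real \<Rightarrow> nat \<Rightarrow> real" where
  "log1mexp_defect x h r = log1mexp_reg (h * (real r + x)) + log1mexp_reg (h * (real r + (1 - x)))
     - 2 * log1mexp_reg (h * (real r + 1/2))"

lemma abs_log1mexp_defect_0:
  fixes x h :: real
  assumes "0 < h" "0 < x" "x < 1"
  shows "\<bar>log1mexp_defect x h 0\<bar> \<le> h"
proof -
  have "0 < h * x" "0 < h * (1 - x)" "0 < h * (1/2)" using assms by auto
  note log1mexp_reg_bounds[OF this(1)] log1mexp_reg_bounds[OF this(2)] log1mexp_reg_bounds[OF this(3)]
  then show ?thesis unfolding log1mexp_defect_def using assms by (simp add: algebra_simps abs_le_iff)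
qed

lemma abs_log1mexp_defect_Suc:
  fixes x h :: real
  assumes h: "0 < h" and x: "0 < x" "x < 1"
  shows "\<bar>log1mexp_defect x h (Suc n)\<bar> \<le> 2 * h * (1 / (1 + h * real n) - 1 / (1 + h * (real n + 1)))"
proof -
  define p where "p = h * (real (Suc n) + 1/2)"
  define d where "d = h * (x - 1/2)"
  have "\<bar>x - 1/2\<bar> \<le> 1/2" using x by arith
  then have d: "\<bar>d\<bar> \<le> h / 2" using h by (simp add: d_def abs_mult)
  then have near: "h * (real n + 1) \<le> p - \<bar>d\<bar>" by (simp add: p_def algebra_simps)
  have denoms: "0 < 1 + h * real n" "0 < 1 + h * (real n + 1)" using h by (simp_all add: add_pos_nonneg)
  have "0 < h * (real n + 1)" using h by simp
  have "log1mexp_defect x h (Suc n) = log1mexp_reg (p + d) + log1mexp_reg (p - d) - 2 * log1mexp_reg p"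
    unfolding log1mexp_defect_def p_def d_def by (simp add: algebra_simps)
  also have "\<bar>\<dots>\<bar> \<le> 2 * d\<^sup>2 * (4 / (1 + (p - \<bar>d\<bar>))\<^sup>2)"
    using near \<open>0 < h * (real n + 1)\<close> by (intro log1mexp_reg_second_difference) linarith
  also have "\<dots> \<le> 2 * (h / 2)\<^sup>2 * (4 / ((1 + h * real n) * (1 + h * (real n + 1))))"
  proof (intro mult_mono divide_left_mono)
    show "d\<^sup>2 \<le> (h / 2)\<^sup>2" using power_mono[OF d abs_ge_zero, of 2] by simp
    have "(1 + h * real n) * (1 + h * (real n + 1)) \<le> (1 + h * (real n + 1))\<^sup>2"
      using h by (simp add: power2_eq_square mult_right_mono)
    also have "\<dots> \<le> (1 + (p - \<bar>d\<bar>))\<^sup>2" using near denoms by (intro power_mono) auto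
    finally show "(1 + h * real n) * (1 + h * (real n + 1)) \<le> (1 + (p - \<bar>d\<bar>))\<^sup>2" .
  qed (use denoms near \<open>0 < h * (real n + 1)\<close> in auto)
  also have "\<dots> = 2 * h * (1 / (1 + h * real n) - 1 / (1 + h * (real n + 1)))"
    using denoms by (simp add: field_simps power2_eq_square)
  finally show ?thesis .
qed

lemma sum_abs_log1mexp_defect_le:
  fixes x h :: real
  assumes "0 < h" "0 < x" "x < 1"
  shows "(\<Sum>r<N. \<bar>log1mexp_defect x h r\<bar>) \<le> 3 * h"
proof -
  have partial: "(\<Sum>r<Suc n. \<bar>log1mexp_defect x h r\<bar>) \<le> 3 * h - 2 * h / (1 + h * real n)" for n
  proof (induction n)
    case 0
    then show ?case using abs_log1mexp_defect_0[OF assms] by simp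
  next
    case (Suc n)
    then show ?case
      using abs_log1mexp_defect_Suc[OF assms, of n] by (simp add: algebra_simps)
  qed
  show ?thesis
  proof (cases N)
    case (Suc n)
    have "0 \<le> 2 * h / (1 + h * real n)" using assms by simp
    then show ?thesis unfolding Suc using partial[of n] by linarith
  qed (use assms in simp)
qed

subsection \<open>Asymptotics\<close>

lemma log_qpoch_pair_approx:
  fixes x h :: real
  assumes h: "0 < h" and x: "0 < x" "x < 1"
  shows "\<bar>log_qpoch x h + log_qpoch (1 - x) h - 2 * log_qpoch (1/2) h - ln (sin (pi * x))\<bar> \<le> 3 * h"
proof -
  have split: "log1mexp (h * (real r + x)) + log1mexp (h * (real r + (1 - x))) - 2 * log1mexp (h * (real r + 1/2))
      = log1mexp_defect x h r + ln ((real r + x) * (real r + (1 - x)) / (real r + 1/2)\<^sup>2)" for r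
  proof -
    have "0 < real r + x" "0 < real r + (1 - x)" "0 < real r + 1/2" using x by auto
    then show ?thesis
      unfolding log1mexp_defect_def log1mexp_reg_def using h by (simp add: ln_mult ln_div ln_realpow)
  qed
  have "(\<lambda>r. log1mexp (h * (real r + x)) + log1mexp (h * (real r + (1 - x))) - 2 * log1mexp (h * (real r + 1/2)))
      sums (log_qpoch x h + log_qpoch (1 - x) h - 2 * log_qpoch (1/2) h)"
    using h x by (intro sums_diff sums_add sums_mult log_qpoch_sums) auto
  then have "(\<lambda>r. log1mexp_defect x h r)
      sums (log_qpoch x h + log_qpoch (1 - x) h - 2 * log_qpoch (1/2) h - ln (sin (pi * x)))"
    unfolding split using sums_diff[OF _ ln_sin_pi_sums[OF x]] by fastforce
  then have "(\<lambda>N. \<bar>\<Sum>r<N. log1mexp_defect x h r\<bar>)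
      \<longlonglongrightarrow> \<bar>log_qpoch x h + log_qpoch (1 - x) h - 2 * log_qpoch (1/2) h - ln (sin (pi * x))\<bar>"
    unfolding sums_def by (rule tendsto_rabs)
  moreover have "\<bar>\<Sum>r<N. log1mexp_defect x h r\<bar> \<le> 3 * h" for N
    using sum_abs[of "log1mexp_defect x h" "{..<N}"] sum_abs_log1mexp_defect_le[OF h x, of N] by linarith
  ultimately show ?thesis by (intro LIMSEQ_le_const2) auto
qed

lemma log_qpoch_duplication:
  fixes c h :: real
  assumes h: "0 < h" and c: "0 < c"
  shows "log_qpoch (c/2) h + log_qpoch ((c + 1)/2) h = log_qpoch c (h/2)"
proof -
  have "(\<lambda>r. \<Sum>n\<in>{r * 2..<r * 2 + 2}. log1mexp (h/2 * (real n + c))) sums log_qpoch c (h/2)"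
    using sums_group[OF log_qpoch_sums[of "h/2" c], of 2] h c by simp
  moreover have "(\<Sum>n\<in>{r * 2..<r * 2 + 2}. log1mexp (h/2 * (real n + c)))
      = log1mexp (h * (real r + c/2)) + log1mexp (h * (real r + (c + 1)/2))" for r
  proof -
    have "{r * 2..<r * 2 + 2} = {2 * r, 2 * r + 1}" by auto
    then show ?thesis by (simp add: field_simps)
  qed
  moreover have "(\<lambda>r. log1mexp (h * (real r + c/2)) + log1mexp (h * (real r + (c + 1)/2)))
      sums (log_qpoch (c/2) h + log_qpoch ((c + 1)/2) h)"
    using h c by (intro sums_add log_qpoch_sums) auto
  ultimately show ?thesis by (simp add: sums_unique2)
qed

lemma lambert_half_coeff_le:
  fixes h :: real
  assumes h: "0 < h"
  shows "h * exp (- (h * (1/2) * real m)) / (real m * (1 - exp (- (h * real m)))) \<le> 1 / (real m)\<^sup>2"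
proof (cases "m = 0")
  case False
  define t where "t = h * real m"
  have t: "0 < t" and m: "0 < real m" using h False by (simp_all add: t_def)
  have "exp (-(t/2)) * t \<le> 1 - exp (-t)"
    unfolding one_minus_exp_neg_eq using two_mul_le_exp_minus_exp[of "t/2"] t
    by (simp add: mult_left_mono)
  then have "h * exp (-(t/2)) / (real m * (1 - exp (-t))) \<le> h * exp (-(t/2)) / (real m * (exp (-(t/2)) * t))"
    using m t h by (intro divide_left_mono mult_left_mono mult_pos_pos) auto
  also have "\<dots> = 1 / (real m)\<^sup>2"
    using m h by (simp add: t_def field_simps power2_eq_square)
  finally show ?thesis by (simp add: t_def mult.commute mult.left_commute)
qed simp

lemma log_qpoch_half_tendsto: "((\<lambda>h. h * log_qpoch (1/2) h) \<longlongrightarrow> - (pi\<^sup>2 / 6)) (at_right 0)"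
proof -
  define a where "a m h = h * exp (- (h * (1/2) * real m)) / (real m * (1 - exp (- (h * real m))))"
    for m :: nat and h :: real
  have lim: "((\<lambda>h. a m h) \<longlongrightarrow> 1 / (real m)\<^sup>2) (at_right 0)" for m
  proof (cases "m = 0")
    case False
    then have "0 < real m" by simp
    then show ?thesis unfolding a_def by real_asymp (simp add: power2_eq_square divide_inverse)
  qed (simp add: a_def)
  have "a m h \<le> 1 / (real m)\<^sup>2" "0 \<le> a m h" if "0 < h" for m h
    using lambert_half_coeff_le[OF that, of m] that by (auto simp: a_def)
  then have "\<forall>\<^sub>F (m, h) in sequentially \<times>\<^sub>F at_right 0. norm (a m h) \<le> 1 / (real m)\<^sup>2"
    unfolding eventually_prod_filter
    by (intro exI[of _ "\<lambda>_. True"] exI[of _ "\<lambda>h. 0 < h"]) (auto simp: eventually_at_right_less)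
  moreover have inv_sq: "(\<lambda>m. 1 / (real m)\<^sup>2) sums (pi\<^sup>2 / 6)"
    using sums_Suc_iff[of "\<lambda>m. 1 / (real m)\<^sup>2"] inverse_squares_sums by (simp add: add.commute)
  ultimately have "((\<lambda>h. \<Sum>m. a m h) \<longlongrightarrow> pi\<^sup>2 / 6) (at_right 0)"
    using tannerys_theorem[OF lim] sums_summable[OF inv_sq] sums_unique[OF inv_sq] by simp
  moreover have "h * log_qpoch (1/2) h = - (\<Sum>m. a m h)" if "0 < h" for h
    using that summable_lambert_coeffs[OF that, of "1/2"]
    by (simp add: log_qpoch_lambert a_def suminf_mult[symmetric] times_divide_eq_right)
  then have "\<forall>\<^sub>F h in at_right 0. - (\<Sum>m. a m h) = h * log_qpoch (1/2) h"
    by (simp add: eventually_at_right_less eventually_mono[OF eventually_at_right_less])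
  ultimately show ?thesis by (intro Lim_transform_eventually[OF tendsto_minus]) auto
qed

lemma log_qpoch_half_asymp:
  fixes h :: real
  assumes "0 < h"
  shows "\<bar>log_qpoch (1/2) h + pi\<^sup>2 / (6 * h) - ln 2 / 2\<bar> \<le> 2 * h"
proof -
  define U where "U h = log_qpoch (1/2) h + pi\<^sup>2 / (6 * h) - ln 2 / 2" for h
  have sin_quarter: "ln (sin (pi / 4)) = - (ln 2 / 2)"
  proof -
    have "ln (sin (pi / 4)) = ln (sqrt 2) - ln 2" by (simp add: sin_45 ln_div)
    then show ?thesis by (simp add: ln_sqrt)
  qed
  have "\<bar>U (h/2) - 2 * U h\<bar> \<le> 3 * h" if "0 < h" for h
  proof -
    have "\<bar>log_qpoch (1/4) h + log_qpoch (3/4) h - 2 * log_qpoch (1/2) h + ln 2 / 2\<bar> \<le> 3 * h"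
      using log_qpoch_pair_approx[OF that, of "1/4"] sin_quarter by simp
    moreover have "log_qpoch (1/4) h + log_qpoch (3/4) h = log_qpoch (1/2) (h/2)"
      using log_qpoch_duplication[OF that, of "1/2"] by simp
    moreover have "U (h/2) - 2 * U h = log_qpoch (1/2) (h/2) - 2 * log_qpoch (1/2) h + ln 2 / 2"
      using that by (simp add: U_def field_simps)
    ultimately show ?thesis by simp
  qed
  moreover have "((\<lambda>h. h * U h) \<longlongrightarrow> 0) (at_right 0)"
  proof -
    have "((\<lambda>h. h * log_qpoch (1/2) h + pi\<^sup>2 / 6 - h * (ln 2 / 2))
        \<longlongrightarrow> - (pi\<^sup>2 / 6) + pi\<^sup>2 / 6 - 0 * (ln 2 / 2)) (at_right 0)"
      by (intro tendsto_intros log_qpoch_half_tendsto)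
    moreover have "\<forall>\<^sub>F h in at_right 0. h * log_qpoch (1/2) h + pi\<^sup>2 / 6 - h * (ln 2 / 2) = h * U h"
      using eventually_at_right_less[of "0::real"] by eventually_elim (simp add: U_def field_simps)
    ultimately show ?thesis using Lim_transform_eventually by fastforce
  qed
  ultimately show ?thesis using abs_le_of_doubling[of U 3 h] assms by (simp add: U_def)
qed

lemma log_qpoch_pair_asymp:
  fixes x h :: real
  assumes h: "0 < h" and x: "0 < x" "x < 1"
  shows "\<bar>log_qpoch x h + log_qpoch (1 - x) h + pi\<^sup>2 / (3 * h) - ln (2 * sin (pi * x))\<bar> \<le> 7 * h"
proof -
  have "0 < sin (pi * x)" using x by (intro sin_gt_zero) auto
  then have "log_qpoch x h + log_qpoch (1 - x) h + pi\<^sup>2 / (3 * h) - ln (2 * sin (pi * x))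
      = (log_qpoch x h + log_qpoch (1 - x) h - 2 * log_qpoch (1/2) h - ln (sin (pi * x)))
        + 2 * (log_qpoch (1/2) h + pi\<^sup>2 / (6 * h) - ln 2 / 2)"
    by (simp add: ln_mult)
  then show ?thesis using log_qpoch_pair_approx[OF h x] log_qpoch_half_asymp[OF h] by simp
qed

lemma qpoch_eq_exp_log_qpoch:
  fixes q c d :: real
  assumes q: "0 < q" "q < 1" and c: "0 < c" and d: "0 < d"
  shows "qpoch q c d = exp (log_qpoch (c / d) (- d * ln q))"
proof -
  define h where "h = - d * ln q"
  have h: "0 < h" using q d by (simp add: h_def mult_less_0_iff)
  have "1 - q powr (c + d * real r) = exp (log1mexp (h * (real r + c / d)))" for r
  proof -
    have "q powr (c + d * real r) = exp (- (h * (real r + c / d)))"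
      using q d by (simp add: powr_def h_def field_simps)
    moreover have "0 < h * (real r + c / d)" using h c d by (intro mult_pos_pos add_nonneg_pos) auto
    then have "0 < 1 - exp (- (h * (real r + c / d)))" by simp
    ultimately show ?thesis by (simp add: log1mexp_def)
  qed
  then show ?thesis
    unfolding qpoch_def log_qpoch_def h_def[symmetric]
    using prodinf_exp[OF sums_summable[OF log_qpoch_sums[OF h]]] c d by simp
qed

theorem mainTheorem7:
  fixes a b :: real
  assumes "a > 0" and "b > 0"
  shows "(\<lambda>q. ln (qpoch q a (a + b) * qpoch q b (a + b))
              - pi\<^sup>2 / (3 * (a + b) * ln q)
              - ln (2 * sin (a / (a + b) * pi)))
         \<in> O[at_left 1](\<lambda>q. ln q)"
proof (rule bigoI[where c = "7 * (a + b)"])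
  define x where "x = a / (a + b)"
  have x: "0 < x" "x < 1" and bx: "b / (a + b) = 1 - x"
    using assms by (auto simp: x_def field_simps)
  have "\<forall>\<^sub>F q in at_left 1. 0 < q \<and> q < (1::real)"
    using eventually_at_left_real[OF zero_less_one] by simp
  then show "\<forall>\<^sub>F q in at_left 1. norm (ln (qpoch q a (a + b) * qpoch q b (a + b))
      - pi\<^sup>2 / (3 * (a + b) * ln q) - ln (2 * sin (a / (a + b) * pi))) \<le> 7 * (a + b) * norm (ln q)"
  proof eventually_elim
    case (elim q)
    define h where "h = - (a + b) * ln q"
    have "ln q < 0" using elim by simp
    then have h: "0 < h" unfolding h_def using assms by (intro mult_neg_neg) auto
    have h_eq: "7 * h = 7 * (a + b) * norm (ln q)"
      unfolding h_def using \<open>ln q < 0\<close> by (simp add: algebra_simps)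
    have "ln (qpoch q a (a + b) * qpoch q b (a + b)) = log_qpoch x h + log_qpoch (1 - x) h"
      using elim assms by (simp add: qpoch_eq_exp_log_qpoch h_def x_def bx flip: exp_add)
    moreover have "3 * h = - (3 * (a + b) * ln q)" by (simp add: h_def algebra_simps)
    then have "pi\<^sup>2 / (3 * (a + b) * ln q) = - (pi\<^sup>2 / (3 * h))" by simp
    moreover have "sin (a / (a + b) * pi) = sin (pi * x)" by (simp add: x_def mult.commute)
    ultimately show ?case using log_qpoch_pair_asymp[OF h x] h_eq by simp
  qed
qed

end
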